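(* Let $G$ be a graph without isolated vertices, $S$ a DDS of $G$, and $u\in\widehat S$ with $P_S(u)\neq\emptyset$. Let $v_u\in P_S(u)$, and let $P'=\{v\in P_S(u): o_S(v)\le o_S(v_u)\}$. Then: (1) $S^1$ is a dominating sequence of $G$; (2) $S_{u\to v_u}$ is a DDS of $G$ and $\widehat{S_{u\to v_u}}=\widehat S$; (3) if $S$ is a GDDS of $G$, then so is $S_{u\to v_u}$; (4) $P'\cup(\widehat{S^1}\setminus\{u\})\subseteq\widehat{(S_{u\to v_u})^1}$.
   Context: Graphs are finite, simple, undirected; $N[v]$ closed neighborhood. A sequence $S=(v_1,\dots,v_k)$ of distinct vertices is a double neighborhood sequence (DNS) if for each $i$ some $w\in N[v_i]$ satisfies $|\{j<i:w\in N[v_j]\}|\le1$; a DDS if moreover its vertex set $D$ satisfies $|N[w]\cap D|\ge2$ for all $w$; a GDDS is a DDS of maximum length. A sequence is legal if $N[v_i]\setminus\bigcup_{j<i}N[v_j]\neq\emptyset$ for all $i\ge2$, and a dominating sequence if moreover its vertex set is a dominating set. $\widehat S$ is the vertex set of $S$, $o_S(v_i)=i$ its position. $N_S^1[v_i]=N[v_i]\setminus\bigcup_{j<i}N[v_j]$, $N_S^2[v_i]=\{w\in N[v_i]:|\{j<i:w\in N[v_j]\}|=1\}$. $S^1$ is the subsequence of $S$ of vertices $v$ with $N_S^1[v]\neq\emptyset$; $S^2$ the subsequence of the remaining ones. For $u\in\widehat{S^1}$, $P_S(u)=\{v\in\widehat{S^2}: N_S^1[u]\cap N_S^2[v]\neq\emptyset\}$.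 For $u,v\in\widehat S$ with $o_S(u)<o_S(v)$, $S_{u\to v}$ is the sequence obtained from $S$ by removing $u$ and reinserting it immediately after $v$. *)

theory Defs
  imports Main
begin

definition graph :: "'a set \<Rightarrow> ('a \<Rightarrow> 'a \<Rightarrow> bool) \<Rightarrow> bool" where
  "graph V E \<longleftrightarrow> finite V \<and> (\<forall>u v. E u v \<longrightarrow> u \<in> V \<and> v \<in> V)
     \<and> (\<forall>u v. E u v \<longrightarrow> E v u) \<and> (\<forall>v. \<not> E v v)"

definition no_isolated :: "'a set \<Rightarrow> ('a \<Rightarrow> 'a \<Rightarrow> bool) \<Rightarrow> bool" where
  "no_isolated V E \<longleftrightarrow> (\<forall>v\<in>V. \<exists>w. E v w)"

definition cnbhd :: "('a \<Rightarrow> 'a \<Rightarrow> bool) \<Rightarrow> 'a \<Rightarrow> 'a set" where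
  "cnbhd E v = insert v {w. E v w}"

text \<open>Sequences are lists; S ! i is v_(i+1) (0-based indices).\<close>
definition is_seq :: "'a set \<Rightarrow> 'a list \<Rightarrow> bool" where
  "is_seq V S \<longleftrightarrow> distinct S \<and> set S \<subseteq> V"

definition dns :: "'a set \<Rightarrow> ('a \<Rightarrow> 'a \<Rightarrow> bool) \<Rightarrow> 'a list \<Rightarrow> bool" where
  "dns V E S \<longleftrightarrow> is_seq V S \<and>
     (\<forall>i < length S. \<exists>w \<in> cnbhd E (S ! i).
        card {j. j < i \<and> w \<in> cnbhd E (S ! j)} \<le> 1)"

definition dds :: "'a set \<Rightarrow> ('a \<Rightarrow> 'a \<Rightarrow> bool) \<Rightarrow> 'a list \<Rightarrow> bool" where
  "dds V E S \<longleftrightarrow> dns V E S \<and> (\<forall>w \<in> V. card (cnbhd E w \<inter> set S) \<ge> 2)"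

definition gdds :: "'a set \<Rightarrow> ('a \<Rightarrow> 'a \<Rightarrow> bool) \<Rightarrow> 'a list \<Rightarrow> bool" where
  "gdds V E S \<longleftrightarrow> dds V E S \<and> (\<forall>S'. dds V E S' \<longrightarrow> length S' \<le> length S)"

definition legal_seq :: "'a set \<Rightarrow> ('a \<Rightarrow> 'a \<Rightarrow> bool) \<Rightarrow> 'a list \<Rightarrow> bool" where
  "legal_seq V E S \<longleftrightarrow> is_seq V S \<and>
     (\<forall>i. 1 \<le> i \<and> i < length S \<longrightarrow>
        cnbhd E (S ! i) - (\<Union>j<i. cnbhd E (S ! j)) \<noteq> {})"

definition dominating_seq :: "'a set \<Rightarrow> ('a \<Rightarrow> 'a \<Rightarrow> bool) \<Rightarrow> 'a list \<Rightarrow> bool" where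
  "dominating_seq V E S \<longleftrightarrow> legal_seq V E S \<and> (\<Union>v\<in>set S. cnbhd E v) = V"

definition before :: "'a list \<Rightarrow> 'a \<Rightarrow> 'a list" where
  "before S v = takeWhile (\<lambda>x. x \<noteq> v) S"

text \<open>Position o_S(v), 1-based.\<close>
definition pos :: "'a list \<Rightarrow> 'a \<Rightarrow> nat" where
  "pos S v = Suc (length (before S v))"

definition N1 :: "('a \<Rightarrow> 'a \<Rightarrow> bool) \<Rightarrow> 'a list \<Rightarrow> 'a \<Rightarrow> 'a set" where
  "N1 E S v = cnbhd E v - (\<Union>x\<in>set (before S v). cnbhd E x)"

definition N2 :: "('a \<Rightarrow> 'a \<Rightarrow> bool) \<Rightarrow> 'a list \<Rightarrow> 'a \<Rightarrow> 'a set" where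
  "N2 E S v = {w \<in> cnbhd E v. card {x \<in> set (before S v). w \<in> cnbhd E x} = 1}"

definition seq1 :: "('a \<Rightarrow> 'a \<Rightarrow> bool) \<Rightarrow> 'a list \<Rightarrow> 'a list" where
  "seq1 E S = filter (\<lambda>v. N1 E S v \<noteq> {}) S"

definition seq2 :: "('a \<Rightarrow> 'a \<Rightarrow> bool) \<Rightarrow> 'a list \<Rightarrow> 'a list" where
  "seq2 E S = filter (\<lambda>v. N1 E S v = {}) S"

definition PS :: "('a \<Rightarrow> 'a \<Rightarrow> bool) \<Rightarrow> 'a list \<Rightarrow> 'a \<Rightarrow> 'a set" where
  "PS E S u = {v \<in> set (seq2 E S). N1 E S u \<inter> N2 E S v \<noteq> {}}"

text \<open>S_{u->v}: remove u and reinsert it immediately after v.\<close>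
definition move_after :: "'a list \<Rightarrow> 'a \<Rightarrow> 'a \<Rightarrow> 'a list" where
  "move_after S u v = (let T = removeAll u S; i = Suc (length (takeWhile (\<lambda>x. x \<noteq> v) T))
                       in take i T @ u # drop i T)"

end

theory Submission
  imports Defs
begin

text \<open>
  Every vertex is covered for the first time by some vertex of \<open>S\<close>, which therefore has it as
  a new neighbour; this makes \<open>S\<^sup>1\<close> legal and dominating.

  For the move, pick \<open>w \<in> N\<^sup>1\<^sub>S[u] \<inter> N\<^sup>2\<^sub>S[v\<^sub>u]\<close>. Then \<open>u\<close> is the only vertex before \<open>v\<^sub>u\<close>
  whose closed neighbourhood contains \<open>w\<close>, so after reinserting \<open>u\<close> directly behind \<open>v\<^sub>u\<close>
  the vertex \<open>w\<close> is seen only by \<open>v\<^sub>u\<close> before \<open>u\<close>. Every other vertex only loses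
  predecessors, so its double-neighbourhood witness and its new neighbours survive. A vertex
  \<open>v \<in> P\<^sub>S(u)\<close> between \<open>u\<close> and \<open>v\<^sub>u\<close> loses exactly the predecessor \<open>u\<close>, the unique one that
  saw its \<open>N\<^sup>2\<close>-witness, which thereby becomes a new neighbour of \<open>v\<close>.
\<close>

lemma before_Nil [simp]: "before [] x = []"
  by (simp add: before_def)

lemma before_Cons [simp]: "before (y # ys) x = (if y = x then [] else y # before ys x)"
  by (simp add: before_def)

lemma before_append [simp]:
  "before (xs @ ys) x = (if x \<in> set xs then before xs x else xs @ before ys x)"
  by (induction xs) auto

lemma notin_set_before: "x \<notin> set (before xs x)"
  by (induction xs) auto

lemma set_before_subset: "set (before xs x) \<subseteq> set xs"
  by (induction xs) auto

lemma before_split: "x \<in> set xs \<Longrightarrow> \<exists>ys. xs = before xs x @ x # ys"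
  by (induction xs) auto

lemma in_set_before_if_notin_before:
  "x \<in> set xs \<Longrightarrow> x \<noteq> y \<Longrightarrow> y \<notin> set (before xs x) \<Longrightarrow> x \<in> set (before xs y)"
  by (induction xs) (auto split: if_splits)

lemma before_nth: "distinct xs \<Longrightarrow> i < length xs \<Longrightarrow> before xs (xs ! i) = take i xs"
  unfolding before_def
  by (rule takeWhile_eq_take_P_nth) (auto simp: nth_eq_iff_index_eq)

lemma set_before_filter: "P x \<Longrightarrow> set (before (filter P xs) x) \<subseteq> set (before xs x)"
  by (induction xs) auto

lemma pos_le_pos_iff:
  assumes "distinct xs" "y \<in> set xs"
  shows "pos xs x \<le> pos xs y \<longleftrightarrow> x \<in> set (before xs y) \<or> x = y"
  using assms by (induction xs) (auto simp: pos_def)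

lemma card_nth_Collect:
  assumes "distinct xs" "i \<le> length xs"
  shows "card {j. j < i \<and> P (xs ! j)} = card {x \<in> set (take i xs). P x}"
proof -
  have "{x \<in> set (take i xs). P x} = (nth xs) ` {j. j < i \<and> P (xs ! j)}"
    using assms(2) by (auto simp: in_set_conv_nth)
  moreover have "inj_on (nth xs) {j. j < i \<and> P (xs ! j)}"
    using assms by (intro inj_on_nth) auto
  ultimately show ?thesis by (simp add: card_image)
qed

lemma dns_iff_before:
  "dns V E S \<longleftrightarrow> is_seq V S \<and>
     (\<forall>v\<in>set S. \<exists>w\<in>cnbhd E v. card {x \<in> set (before S v). w \<in> cnbhd E x} \<le> 1)"
proof -
  have "card {j. j < i \<and> w \<in> cnbhd E (S ! j)} = card {x \<in> set (before S (S ! i)). w \<in> cnbhd E x}"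
    if "distinct S" "i < length S" for i w
    using that card_nth_Collect[of S i] by (simp add: before_nth)
  then show ?thesis
    unfolding dns_def is_seq_def by (auto simp: all_set_conv_all_nth)
qed

lemma legal_seq_seq1:
  assumes "is_seq V S"
  shows "legal_seq V E (seq1 E S)"
  unfolding legal_seq_def
proof (intro conjI allI impI)
  let ?L = "seq1 E S"
  show "is_seq V ?L"
    using assms by (auto simp: is_seq_def seq1_def)
  then have "distinct ?L" by (simp add: is_seq_def)
  fix i assume i: "1 \<le> i \<and> i < length ?L"
  then have N1_nonempty: "N1 E S (?L ! i) \<noteq> {}"
    using nth_mem[of i ?L] by (simp add: seq1_def)
  have "set (take i ?L) = set (before ?L (?L ! i))"
    using \<open>distinct ?L\<close> i by (simp add: before_nth)
  also have "\<dots> \<subseteq> set (before S (?L ! i))"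
    unfolding seq1_def by (rule set_before_filter) (use N1_nonempty in \<open>simp add: seq1_def\<close>)
  finally have prefix: "set (take i ?L) \<subseteq> set (before S (?L ! i))" .
  have "?L ! j \<in> set (before S (?L ! i))" if "j < i" for j
  proof -
    have "?L ! j \<in> set (take i ?L)"
      using that i by (auto simp: in_set_conv_nth intro!: exI[of _ j])
    with prefix show ?thesis by blast
  qed
  then have "(\<Union>j<i. cnbhd E (?L ! j)) \<subseteq> (\<Union>x\<in>set (before S (?L ! i)). cnbhd E x)"
    by blast
  with N1_nonempty show "cnbhd E (?L ! i) - (\<Union>j<i. cnbhd E (?L ! j)) \<noteq> {}"
    unfolding N1_def by blast
qed

lemma Union_cnbhd_seq1: "(\<Union>v\<in>set (seq1 E S). cnbhd E v) = (\<Union>v\<in>set S. cnbhd E v)"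
proof
  show "(\<Union>v\<in>set S. cnbhd E v) \<subseteq> (\<Union>v\<in>set (seq1 E S). cnbhd E v)"
  proof
    fix w assume "w \<in> (\<Union>v\<in>set S. cnbhd E v)"
    then obtain xs z ys where S: "S = xs @ z # ys" and "w \<in> cnbhd E z"
      and first: "\<forall>x\<in>set xs. w \<notin> cnbhd E x"
      using split_list_first_prop[of S "\<lambda>x. w \<in> cnbhd E x"] by blast
    then have "z \<notin> set xs" by blast
    then have "before S z = xs" by (simp add: S)
    then have "w \<in> N1 E S z"
      using \<open>w \<in> cnbhd E z\<close> first by (auto simp: N1_def)
    then show "w \<in> (\<Union>v\<in>set (seq1 E S). cnbhd E v)"
      using S by (auto simp: seq1_def N1_def)
  qed
qed (auto simp: seq1_def)

lemma Union_cnbhd_dds: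
  assumes "graph V E" "dds V E S"
  shows "(\<Union>v\<in>set S. cnbhd E v) = V"
proof
  show "(\<Union>v\<in>set S. cnbhd E v) \<subseteq> V"
    using assms by (auto simp: graph_def dds_def dns_def is_seq_def cnbhd_def)
  show "V \<subseteq> (\<Union>v\<in>set S. cnbhd E v)"
  proof
    fix w assume "w \<in> V"
    then have "cnbhd E w \<inter> set S \<noteq> {}"
      using assms(2) by (fastforce simp: dds_def)
    then show "w \<in> (\<Union>v\<in>set S. cnbhd E v)"
      using assms(1) unfolding graph_def cnbhd_def by blast
  qed
qed

lemma dominating_seq_seq1:
  assumes "graph V E" "dds V E S"
  shows "dominating_seq V E (seq1 E S)"
  using assms legal_seq_seq1[of V S E] Union_cnbhd_seq1[of E S] Union_cnbhd_dds[OF assms]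
  by (simp add: dominating_seq_def dds_def dns_def)

lemma N1_antimono: "set (before S' v) \<subseteq> set (before S v) \<Longrightarrow> N1 E S v \<subseteq> N1 E S' v"
  unfolding N1_def by blast

lemma N1_inter_N2_unique:
  assumes "u \<in> set S" "w \<in> N1 E S u" "w \<in> N2 E S v"
  shows "{x \<in> set (before S v). w \<in> cnbhd E x} = {u}"
proof -
  have "card {x \<in> set (before S v). w \<in> cnbhd E x} = 1"
    using assms(3) by (simp add: N2_def)
  then obtain z where z: "{x \<in> set (before S v). w \<in> cnbhd E x} = {z}"
    by (auto simp: card_1_singleton_iff)
  have w_u: "w \<in> cnbhd E u" "\<forall>x\<in>set (before S u). w \<notin> cnbhd E x"
    using assms(2) by (auto simp: N1_def)
  have "u \<noteq> v"
    using w_u(2) z by blast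
  moreover have "v \<notin> set (before S u)"
    using w_u(2) assms(3) by (auto simp: N2_def)
  ultimately have "u \<in> set (before S v)"
    by (intro in_set_before_if_notin_before[OF assms(1)])
  with w_u(1) z have "u = z"
    by blast
  with z show ?thesis
    by simp
qed

lemma move_after_split:
  assumes "distinct (A1 @ u # A2 @ v # B)"
  shows "move_after (A1 @ u # A2 @ v # B) u v = A1 @ A2 @ v # u # B"
proof -
  have "removeAll u (A1 @ u # A2 @ v # B) = (A1 @ A2) @ v # B"
    using assms by auto
  moreover have "takeWhile (\<lambda>x. x \<noteq> v) ((A1 @ A2) @ v # B) = A1 @ A2"
    using assms by (subst takeWhile_append2) auto
  ultimately show ?thesis
    by (simp add: move_after_def)
qed

lemma set_move_after: "u \<in> set S \<Longrightarrow> set (move_after S u v) = set S"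
proof -
  have "set (take i T @ u # drop i T) = insert u (set T)" for i and T :: "'a list"
    using set_append[of "take i T" "drop i T"] by (simp del: set_append) auto
  then show "u \<in> set S \<Longrightarrow> set (move_after S u v) = set S"
    by (auto simp: move_after_def Let_def)
qed

lemma distinct_move_after: "distinct S \<Longrightarrow> distinct (move_after S u v)"
proof -
  have "distinct (take i T @ u # drop i T)" if "distinct T" "u \<notin> set T" for i and T :: "'a list"
    using that distinct_append[of "take i T" "drop i T"]
    by (simp del: distinct_append append_take_drop_id) (auto dest: in_set_takeD in_set_dropD)
  then show "distinct S \<Longrightarrow> distinct (move_after S u v)"
    by (simp add: move_after_def Let_def distinct_removeAll)
qed

lemma set_before_move_after:
  assumes "distinct S" "u \<in> set (before S v)" "v \<in> set S"
  shows "set (before (move_after S u v) y) =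
    (if y = u then insert v (set (before S v) - {u})
     else if pos S y \<le> pos S v then set (before S y) - {u}
     else set (before S y))"
proof -
  obtain B where "S = before S v @ v # B"
    using before_split[OF assms(3)] by blast
  moreover obtain A1 A2 where "before S v = A1 @ u # A2"
    using assms(2) split_list by metis
  ultimately have S: "S = A1 @ u # A2 @ v # B"
    by simp
  with assms(1) have moved: "move_after S u v = A1 @ A2 @ v # u # B"
    by (simp add: move_after_split)
  show ?thesis
    unfolding pos_le_pos_iff[OF assms(1,3)] moved using assms(1) unfolding S
    by (auto split: if_splits dest: set_before_subset[THEN subsetD])
qed

lemma set_before_move_after_subset:
  assumes "distinct S" "u \<in> set (before S v)" "v \<in> set S" "y \<noteq> u"
  shows "set (before (move_after S u v) y) \<subseteq> set (before S y)"
  using set_before_move_after[OF assms(1-3), of y] assms(4) by auto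

lemma length_move_after:
  assumes "distinct S" "u \<in> set S"
  shows "length (move_after S u v) = length S"
  using distinct_card[OF assms(1)] distinct_card[OF distinct_move_after[OF assms(1)]]
    set_move_after[OF assms(2)] by metis

lemma dns_move_after:
  assumes "dns V E S" "u \<in> set S" "v \<in> set S" "N1 E S u \<inter> N2 E S v \<noteq> {}"
  shows "dns V E (move_after S u v)"
  unfolding dns_iff_before
proof (intro conjI ballI)
  let ?S' = "move_after S u v"
  obtain w where w: "w \<in> N1 E S u" "w \<in> N2 E S v"
    using assms(4) by blast
  have "distinct S" "set S \<subseteq> V"
    using assms(1) by (auto simp: dns_def is_seq_def)
  then show "is_seq V ?S'"
    by (simp add: is_seq_def distinct_move_after set_move_after assms(2))
  have unique: "{x \<in> set (before S v). w \<in> cnbhd E x} = {u}"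
    using assms(2) w by (rule N1_inter_N2_unique)
  then have "u \<in> set (before S v)" by blast
  fix y assume "y \<in> set ?S'"
  show "\<exists>w\<in>cnbhd E y. card {x \<in> set (before ?S' y). w \<in> cnbhd E x} \<le> 1"
  proof (cases "y = u")
    case True
    have "{x \<in> set (before ?S' y). w \<in> cnbhd E x} \<subseteq> {v}"
      using set_before_move_after[OF \<open>distinct S\<close> \<open>u \<in> set (before S v)\<close> assms(3)] True unique
      by auto
    then have "card {x \<in> set (before ?S' y). w \<in> cnbhd E x} \<le> 1"
      using card_mono[of "{v}"] by fastforce
    moreover have "w \<in> cnbhd E y"
      using w(1) True by (simp add: N1_def)
    ultimately show ?thesis by blast
  next
    case False
    then have "y \<in> set S"
      using \<open>y \<in> set ?S'\<close> set_move_after[OF assms(2)] by blast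
    then obtain w' where w': "w' \<in> cnbhd E y" "card {x \<in> set (before S y). w' \<in> cnbhd E x} \<le> 1"
      using assms(1) unfolding dns_iff_before by blast
    have "set (before ?S' y) \<subseteq> set (before S y)"
      using set_before_move_after_subset[OF \<open>distinct S\<close> \<open>u \<in> set (before S v)\<close> assms(3) False] .
    then have "card {x \<in> set (before ?S' y). w' \<in> cnbhd E x} \<le> card {x \<in> set (before S y). w' \<in> cnbhd E x}"
      by (intro card_mono) auto
    with w' show ?thesis
      by (meson order_trans)
  qed
qed

lemma dds_move_after:
  assumes "dds V E S" "u \<in> set S" "v \<in> set S" "N1 E S u \<inter> N2 E S v \<noteq> {}"
  shows "dds V E (move_after S u v)"
  using assms dns_move_after[of V E S u v] set_move_after[OF assms(2)] by (simp add: dds_def)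

lemma gdds_move_after:
  assumes "gdds V E S" "u \<in> set S" "v \<in> set S" "N1 E S u \<inter> N2 E S v \<noteq> {}"
  shows "gdds V E (move_after S u v)"
proof -
  have "dds V E S" using assms(1) by (simp add: gdds_def)
  then have "length (move_after S u v) = length S"
    using assms(2) by (intro length_move_after) (auto simp: dds_def dns_def is_seq_def)
  with assms dds_move_after[OF \<open>dds V E S\<close> assms(2-4)] show ?thesis
    by (simp add: gdds_def)
qed

lemma seq1_move_after_subset:
  assumes "distinct S" "u \<in> set (before S v)" "v \<in> set S"
  shows "set (seq1 E S) - {u} \<subseteq> set (seq1 E (move_after S u v))"
proof
  fix y assume y: "y \<in> set (seq1 E S) - {u}"
  then have "N1 E S y \<subseteq> N1 E (move_after S u v) y"
    using set_before_move_after_subset[OF assms] by (intro N1_antimono) blast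
  with y assms(2) show "y \<in> set (seq1 E (move_after S u v))"
    using set_move_after[of u S v] set_before_subset[of S v] by (auto simp: seq1_def)
qed

lemma in_seq1_move_after:
  assumes "distinct S" "u \<in> set (before S v)" "v \<in> set S"
    and "y \<in> set S" "N1 E S u \<inter> N2 E S y \<noteq> {}" "pos S y \<le> pos S v"
  shows "y \<in> set (seq1 E (move_after S u v))"
proof -
  obtain w where w: "w \<in> N1 E S u" "w \<in> N2 E S y"
    using assms(5) by blast
  have "u \<in> set S"
    using assms(2) set_before_subset by fast
  then have unique: "{x \<in> set (before S y). w \<in> cnbhd E x} = {u}"
    using w by (rule N1_inter_N2_unique)
  then have "y \<noteq> u"
    using notin_set_before by fast
  then have "set (before (move_after S u v) y) = set (before S y) - {u}"
    using set_before_move_after[OF assms(1-3), of y] assms(6) by simp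
  then have "w \<in> N1 E (move_after S u v) y"
    using unique w(2) by (auto simp: N1_def N2_def)
  with assms(4) \<open>u \<in> set S\<close> show ?thesis
    by (auto simp: seq1_def set_move_after)
qed

theorem lemma1:
  fixes V :: "'a set" and E :: "'a \<Rightarrow> 'a \<Rightarrow> bool" and S :: "'a list" and u vu :: 'a
  assumes "graph V E" and "no_isolated V E" and "dds V E S"
    and "u \<in> set S" and "PS E S u \<noteq> {}" and "vu \<in> PS E S u"
  shows "dominating_seq V E (seq1 E S)
    \<and> (dds V E (move_after S u vu) \<and> set (move_after S u vu) = set S)
    \<and> (gdds V E S \<longrightarrow> gdds V E (move_after S u vu))
    \<and> {v \<in> PS E S u. pos S v \<le> pos S vu} \<union> (set (seq1 E S) - {u})
        \<subseteq> set (seq1 E (move_after S u vu))"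
proof -
  have "distinct S"
    using assms(3) by (simp add: dds_def dns_def is_seq_def)
  from assms(6) have vu: "vu \<in> set S" "N1 E S u \<inter> N2 E S vu \<noteq> {}"
    by (auto simp: PS_def seq2_def)
  then have "u \<in> set (before S vu)"
    using N1_inter_N2_unique[OF assms(4)] by blast
  then have "{v \<in> PS E S u. pos S v \<le> pos S vu} \<subseteq> set (seq1 E (move_after S u vu))"
    using in_seq1_move_after[OF \<open>distinct S\<close> _ vu(1)] by (auto simp: PS_def seq2_def)
  moreover have "set (seq1 E S) - {u} \<subseteq> set (seq1 E (move_after S u vu))"
    using seq1_move_after_subset[OF \<open>distinct S\<close> \<open>u \<in> set (before S vu)\<close> vu(1)] .
  ultimately show ?thesis
    using dominating_seq_seq1[OF assms(1,3)] dds_move_after[OF assms(3,4) vu]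
      gdds_move_after[OF _ assms(4) vu] set_move_after[OF assms(4)]
    by blast
qed

end
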